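(* Let $i\geq 2$ be an integer and let $D$ be an oriented graph (a digraph with no pair of opposite arcs) with $D\in\mathcal{LE}_i$. Then $D$ has a vertex $v$ such that $|N^{++}(v)|\geq |N^+(v)|$, where $N^+(v)$ is the out-neighbourhood of $v$ and $N^{++}(v)=\big(\bigcup_{u\in N^+(v)}N^+(u)\big)\setminus N^+(v)$. (That is, Seymour's Second Neighbourhood Conjecture holds for every digraph in $\mathcal{LE}_i$, $i\ge 2$.)
   Context: All digraphs are finite, without loops or multiple arcs. Paths and cycles are directed; the length of a path or cycle is its number of arcs. A digraph is strong if for every ordered pair of vertices $x,y$ there is a directed path from $x$ to $y$. For a subdigraph $H$ of a digraph $D$, an ear of $H$ in $D$ is either a directed path in $D$ whose two end vertices lie in $H$ and whose internal vertices do not lie in $H$, or a directed cycle in $D$ having exactly one vertex in $H$. An ear decomposition of a strong digraph $D$ is a sequence $(D_0,D_1,\ldots,D_k)$ of strong subdigraphs of $D$ such that $D_0$ is a directed cycle, $D_{j+1}=D_j\cup P_j$ where $P_j$ is an ear of $D_j$ in $D$ for every $j\in\{0,\ldots,k-1\}$, and $D_k=D$. For an integer $i\geq 1$, $\mathcal{LE}_i$ denotes the family of strong digraphs having an ear decomposition in which every ear has length at least $i$. *)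

theory Defs
  imports Main
begin

definition digraph :: "'a set \<Rightarrow> ('a \<times> 'a) set \<Rightarrow> bool" where
  "digraph V A \<longleftrightarrow> finite V \<and> A \<subseteq> V \<times> V \<and> (\<forall>v. (v, v) \<notin> A)"

definition oriented :: "'a set \<Rightarrow> ('a \<times> 'a) set \<Rightarrow> bool" where
  "oriented V A \<longleftrightarrow> digraph V A \<and> (\<forall>u v. (u, v) \<in> A \<longrightarrow> (v, u) \<notin> A)"

definition strong :: "'a set \<Rightarrow> ('a \<times> 'a) set \<Rightarrow> bool" where
  "strong V A \<longleftrightarrow> (\<forall>x\<in>V. \<forall>y\<in>V. (x, y) \<in> (A \<inter> V \<times> V)\<^sup>*)"

text \<open>Directed paths are lists of distinct vertices; a path with vertex list xs has
  length (number of arcs) length xs - 1.\<close>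

definition dpath :: "('a \<times> 'a) set \<Rightarrow> 'a list \<Rightarrow> bool" where
  "dpath A xs \<longleftrightarrow> xs \<noteq> [] \<and> distinct xs \<and> (\<forall>k. Suc k < length xs \<longrightarrow> (xs ! k, xs ! Suc k) \<in> A)"

definition path_arcs :: "'a list \<Rightarrow> ('a \<times> 'a) set" where
  "path_arcs xs = set (zip xs (tl xs))"

definition dcycle :: "('a \<times> 'a) set \<Rightarrow> 'a list \<Rightarrow> bool" where
  "dcycle A xs \<longleftrightarrow> length xs \<ge> 2 \<and> dpath A xs \<and> (last xs, hd xs) \<in> A"

definition cycle_arcs :: "'a list \<Rightarrow> ('a \<times> 'a) set" where
  "cycle_arcs xs = set (zip xs (tl xs @ [hd xs]))"

definition path_ear :: "('a \<times> 'a) set \<Rightarrow> 'a set \<Rightarrow> 'a list \<Rightarrow> bool" where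
  "path_ear A VH xs \<longleftrightarrow> dpath A xs \<and> hd xs \<in> VH \<and> last xs \<in> VH
      \<and> (\<forall>x \<in> set (butlast (tl xs)). x \<notin> VH)"

definition cycle_ear :: "('a \<times> 'a) set \<Rightarrow> 'a set \<Rightarrow> 'a list \<Rightarrow> bool" where
  "cycle_ear A VH xs \<longleftrightarrow> dcycle A xs \<and> card (set xs \<inter> VH) = 1"

definition ear_decomp_min :: "nat \<Rightarrow> 'a set \<Rightarrow> ('a \<times> 'a) set \<Rightarrow> bool" where
  "ear_decomp_min i V A \<longleftrightarrow>
     (\<exists>(k::nat) (Vs :: nat \<Rightarrow> 'a set) (As :: nat \<Rightarrow> ('a \<times> 'a) set) (P :: nat \<Rightarrow> 'a list) c.
        dcycle A c \<and> Vs 0 = set c \<and> As 0 = cycle_arcs c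
      \<and> (\<forall>j \<le> k. strong (Vs j) (As j))
      \<and> (\<forall>j < k.
           ((path_ear A (Vs j) (P j) \<and> length (P j) - 1 \<ge> i
               \<and> As (Suc j) = As j \<union> path_arcs (P j))
          \<or> (cycle_ear A (Vs j) (P j) \<and> length (P j) \<ge> i
               \<and> As (Suc j) = As j \<union> cycle_arcs (P j)))
           \<and> Vs (Suc j) = Vs j \<union> set (P j))
      \<and> Vs k = V \<and> As k = A)"

definition LE :: "nat \<Rightarrow> 'a set \<Rightarrow> ('a \<times> 'a) set \<Rightarrow> bool" where
  "LE i V A \<longleftrightarrow> digraph V A \<and> strong V A \<and> ear_decomp_min i V A"

definition out_nbrs :: "('a \<times> 'a) set \<Rightarrow> 'a \<Rightarrow> 'a set" where
  "out_nbrs A v = {u. (v, u) \<in> A}"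

definition second_out_nbrs :: "('a \<times> 'a) set \<Rightarrow> 'a \<Rightarrow> 'a set" where
  "second_out_nbrs A v = (\<Union>u \<in> out_nbrs A v. out_nbrs A u) - out_nbrs A v"

end

theory Submission
  imports Defs
begin

text \<open>The vertices added by the last ear (or, if there are no ears, the vertices of the
  initial cycle) acquire no arcs afterwards, so each of them has out-degree at most one.
  Because every ear has length at least 2, the last ear does add a vertex. In a strong
  digraph a vertex x with out-degree at most one satisfies the inequality: if x has the
  unique out-neighbour u, then u has some out-neighbour other than u, which lies in the
  second out-neighbourhood of x.\<close>

lemma set_zip_subset: "set (zip xs ys) \<subseteq> set xs \<times> set ys"
  using set_zip_leftD set_zip_rightD by fast

lemma distinct_zip_functional:
  assumes "distinct xs" "(x, y) \<in> set (zip xs ys)" "(x, y') \<in> set (zip xs ys)"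
  shows "y = y'"
proof -
  obtain n where n: "xs ! n = x" "ys ! n = y" "n < length xs"
    using assms(2) by (auto simp: in_set_zip)
  obtain n' where n': "xs ! n' = x" "ys ! n' = y'" "n' < length xs"
    using assms(3) by (auto simp: in_set_zip)
  have "n = n'" using n n' assms(1) by (metis nth_eq_iff_index_eq)
  then show ?thesis using n n' by simp
qed

lemma out_nbrs_zip_new_vertex:
  assumes "distinct xs" "B \<subseteq> W \<times> W" "x \<notin> W"
  shows "\<exists>y. out_nbrs (B \<union> set (zip xs ys)) x \<subseteq> {y}"
proof (cases "\<exists>y. (x, y) \<in> set (zip xs ys)")
  case True
  then obtain y where "(x, y) \<in> set (zip xs ys)" by blast
  moreover have "(x, z) \<notin> B" for z using assms(2,3) by blast
  ultimately have "out_nbrs (B \<union> set (zip xs ys)) x \<subseteq> {y}"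
    using distinct_zip_functional[OF assms(1)] unfolding out_nbrs_def by auto
  then show ?thesis by blast
next
  case False
  then show ?thesis using assms unfolding out_nbrs_def by auto
qed

lemma path_ear_new_vertex:
  assumes "path_ear A VH xs" "length xs \<ge> 3"
  shows "\<exists>x \<in> set xs. x \<notin> VH"
proof -
  have "butlast (tl xs) ! 0 = xs ! 1" "0 < length (butlast (tl xs))"
    using assms(2) by (simp_all add: nth_butlast nth_tl)
  then have "xs ! 1 \<in> set (butlast (tl xs))" by (metis nth_mem)
  moreover have "xs ! 1 \<in> set xs" using assms(2) by simp
  ultimately show ?thesis using assms(1) unfolding path_ear_def by blast
qed

lemma cycle_ear_new_vertex:
  assumes "cycle_ear A VH xs"
  shows "\<exists>x \<in> set xs. x \<notin> VH"
proof (rule ccontr)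
  assume "\<not> ?thesis"
  then have "set xs \<inter> VH = set xs" by auto
  moreover have "card (set xs) \<ge> 2"
    using assms distinct_card unfolding cycle_ear_def dcycle_def dpath_def by metis
  ultimately show False using assms unfolding cycle_ear_def by simp
qed

lemma card_out_nbrs_le_second_out_nbrs_if_out_degree_le_one:
  assumes dg: "digraph V A" and st: "strong V A" and x: "x \<in> V"
    and deg: "out_nbrs A x \<subseteq> {u}"
  shows "card (out_nbrs A x) \<le> card (second_out_nbrs A x)"
proof (cases "(x, u) \<in> A")
  case False
  then have "out_nbrs A x = {}" using deg unfolding out_nbrs_def by auto
  then show ?thesis by simp
next
  case True
  then have out_x: "out_nbrs A x = {u}" using deg unfolding out_nbrs_def by auto
  have "u \<in> V" "u \<noteq> x" using True dg unfolding digraph_def by auto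
  then have "(u, x) \<in> (A \<inter> V \<times> V)\<^sup>+" using st x unfolding strong_def
    by (metis rtranclD)
  then obtain w where w: "(u, w) \<in> A" by (metis IntD1 converse_tranclE)
  have "w \<noteq> u" using w dg unfolding digraph_def by auto
  then have w_second: "w \<in> second_out_nbrs A x"
    using w out_x unfolding second_out_nbrs_def out_nbrs_def by auto
  have "second_out_nbrs A x \<subseteq> V"
    using dg unfolding second_out_nbrs_def out_nbrs_def digraph_def by auto
  then have "finite (second_out_nbrs A x)" using dg finite_subset unfolding digraph_def by blast
  with w_second have "card (second_out_nbrs A x) > 0" by (auto simp: card_gt_0_iff)
  then show ?thesis using out_x by simp
qed

text \<open>Path ears and cycle ears are treated alike: the arcs an ear adds are those of a zip of
  its distinct vertex list with some list of its own vertices.\<close>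

lemma ear_step_zip:
  assumes ear: "(path_ear A W P \<and> length P - 1 \<ge> i \<and> B' = B \<union> path_arcs P)
      \<or> (cycle_ear A W P \<and> length P \<ge> i \<and> B' = B \<union> cycle_arcs P)"
    and "i \<ge> 2"
  shows "distinct P" and "\<exists>x \<in> set P. x \<notin> W"
    and "\<exists>ys. set ys \<subseteq> set P \<and> B' = B \<union> set (zip P ys)"
proof -
  from ear consider
      (path) "path_ear A W P" "length P \<ge> 3" "B' = B \<union> path_arcs P"
    | (cycle) "cycle_ear A W P" "B' = B \<union> cycle_arcs P"
    using assms(2) by fastforce
  then have "distinct P \<and> (\<exists>x \<in> set P. x \<notin> W)
      \<and> (\<exists>ys. set ys \<subseteq> set P \<and> B' = B \<union> set (zip P ys))"
  proof cases
    case path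
    have "distinct P" using path(1) unfolding path_ear_def dpath_def by simp
    moreover have "set (tl P) \<subseteq> set P" by (cases P) auto
    ultimately show ?thesis
      using path path_ear_new_vertex unfolding path_arcs_def by blast
  next
    case cycle
    then have "distinct P" "P \<noteq> []" unfolding cycle_ear_def dcycle_def dpath_def by auto
    then have "set (tl P @ [hd P]) \<subseteq> set P" by (metis rotate1_hd_tl set_rotate1 order_refl)
    then show ?thesis
      using \<open>distinct P\<close> cycle cycle_ear_new_vertex unfolding cycle_arcs_def by blast
  qed
  then show "distinct P" "\<exists>x \<in> set P. x \<notin> W"
    "\<exists>ys. set ys \<subseteq> set P \<and> B' = B \<union> set (zip P ys)"
    by blast+
qed

lemma ear_decomp_min_out_degree_le_one:
  assumes "ear_decomp_min i V A" "i \<ge> 2"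
  shows "\<exists>x \<in> V. \<exists>y. out_nbrs A x \<subseteq> {y}"
proof -
  obtain k Vs As P c where c: "dcycle A c" and V0: "Vs 0 = set c" and A0: "As 0 = cycle_arcs c"
    and steps: "\<And>j. j < k \<Longrightarrow>
           ((path_ear A (Vs j) (P j) \<and> length (P j) - 1 \<ge> i
               \<and> As (Suc j) = As j \<union> path_arcs (P j))
          \<or> (cycle_ear A (Vs j) (P j) \<and> length (P j) \<ge> i
               \<and> As (Suc j) = As j \<union> cycle_arcs (P j)))
           \<and> Vs (Suc j) = Vs j \<union> set (P j)"
    and Vk: "Vs k = V" and Ak: "As k = A"
    using assms(1) unfolding ear_decomp_min_def by blast
  have "distinct c" "c \<noteq> []" using c unfolding dcycle_def dpath_def by auto
  have cycle_zip: "As 0 = set (zip c (tl c @ [hd c]))" using A0 unfolding cycle_arcs_def .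
  have arcs_inside: "As j \<subseteq> Vs j \<times> Vs j" if "j \<le> k" for j
    using that
  proof (induction j)
    case 0
    have "set (tl c @ [hd c]) \<subseteq> set c"
      using \<open>c \<noteq> []\<close> by (metis rotate1_hd_tl set_rotate1 order_refl)
    then show ?case unfolding cycle_zip V0 using set_zip_subset[of c] by blast
  next
    case (Suc j)
    then have IH: "As j \<subseteq> Vs j \<times> Vs j" and j: "j < k" by auto
    obtain ys where "set ys \<subseteq> set (P j)" and As_Suc: "As (Suc j) = As j \<union> set (zip (P j) ys)"
      using ear_step_zip(3)[OF conjunct1[OF steps[OF j]] assms(2)] by blast
    then have "set (zip (P j) ys) \<subseteq> set (P j) \<times> set (P j)"
      using set_zip_subset[of "P j" ys] by blast
    then show ?case unfolding As_Suc conjunct2[OF steps[OF j]] using IH by blast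
  qed
  show ?thesis
  proof (cases k)
    case 0
    have "A = {} \<union> set (zip c (tl c @ [hd c]))" using cycle_zip Ak 0 by simp
    then have "\<exists>y. out_nbrs A (hd c) \<subseteq> {y}"
      using out_nbrs_zip_new_vertex[OF \<open>distinct c\<close>, of "{}" "{}"] by simp
    moreover have "hd c \<in> V" using hd_in_set[OF \<open>c \<noteq> []\<close>] V0 Vk 0 by simp
    ultimately show ?thesis by blast
  next
    case (Suc m)
    then have m: "m < k" by simp
    note last_ear = ear_step_zip[OF conjunct1[OF steps[OF m]] assms(2)]
    obtain ys where A_eq: "A = As m \<union> set (zip (P m) ys)"
      using last_ear(3) Ak Suc by auto
    obtain x where "x \<in> set (P m)" "x \<notin> Vs m" using last_ear(2) by blast
    then have "\<exists>y. out_nbrs A x \<subseteq> {y}"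
      unfolding A_eq using out_nbrs_zip_new_vertex[OF last_ear(1) arcs_inside] m by simp
    moreover have "x \<in> V" using conjunct2[OF steps[OF m]] Vk Suc \<open>x \<in> set (P m)\<close> by blast
    ultimately show ?thesis by blast
  qed
qed

theorem mainTheorem1:
  fixes i :: nat and V :: "'a set" and A :: "('a \<times> 'a) set"
  assumes "i \<ge> 2" and "oriented V A" and "LE i V A"
  shows "\<exists>v \<in> V. card (second_out_nbrs A v) \<ge> card (out_nbrs A v)"
proof -
  have dg: "digraph V A" and st: "strong V A" and ears: "ear_decomp_min i V A"
    using assms(3) unfolding LE_def by auto
  obtain x y where "x \<in> V" "out_nbrs A x \<subseteq> {y}"
    using ear_decomp_min_out_degree_le_one[OF ears assms(1)] by blast
  then show ?thesis using card_out_nbrs_le_second_out_nbrs_if_out_degree_le_one[OF dg st] by blast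
qed

end
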